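(* Let $G=(V,E)$ be a connected simple graph with a set-valued metric $\Omega(-,-)$ taking values in subsets of a finite set $\Omega$, and suppose there is an equivariant involution $x\mapsto -x$ on $V$. Then the diameter of $G$ is at least $|\Omega|$.
   Context: For a connected simple graph $G=(V,E)$ and a set $\Omega$, a set-valued metric on $G$ is a function $\Omega(-,-):V\times V\to 2^{\Omega}$ such that $\Omega(x,y)=\Omega(y,x)$ for all $x,y$; $|\Omega(x,y)|=1$ whenever $\{x,y\}\in E$; and $\Omega(x,z)=\Omega(x,y)\triangle\Omega(y,z)$ for all $x,y,z$, where $\triangle$ is symmetric difference. An involution $x\mapsto -x$ on $V$ is equivariant if $\Omega(x,-y)=\Omega\setminus\Omega(x,y)$ for all $x,y\in V$. *)

theory Defs
  imports Main "HOL-Library.Extended_Nat"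
begin

definition simple_graph :: "'a set \<Rightarrow> 'a set set \<Rightarrow> bool" where
  "simple_graph V E \<longleftrightarrow> (\<forall>e\<in>E. \<exists>x y. e = {x, y} \<and> x \<noteq> y \<and> x \<in> V \<and> y \<in> V)"

definition is_walk :: "'a set \<Rightarrow> 'a set set \<Rightarrow> 'a list \<Rightarrow> bool" where
  "is_walk V E p \<longleftrightarrow> p \<noteq> [] \<and> set p \<subseteq> V \<and>
     (\<forall>i. Suc i < length p \<longrightarrow> {p ! i, p ! Suc i} \<in> E)"

definition connected_graph :: "'a set \<Rightarrow> 'a set set \<Rightarrow> bool" where
  "connected_graph V E \<longleftrightarrow> V \<noteq> {} \<and>
     (\<forall>x\<in>V. \<forall>y\<in>V. \<exists>p. is_walk V E p \<and> hd p = x \<and> last p = y)"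

definition graph_dist :: "'a set \<Rightarrow> 'a set set \<Rightarrow> 'a \<Rightarrow> 'a \<Rightarrow> enat" where
  "graph_dist V E x y =
     (INF p \<in> {p. is_walk V E p \<and> hd p = x \<and> last p = y}. enat (length p - 1))"

definition diameter :: "'a set \<Rightarrow> 'a set set \<Rightarrow> enat" where
  "diameter V E = (SUP x\<in>V. SUP y\<in>V. graph_dist V E x y)"

definition set_valued_metric ::
  "'a set \<Rightarrow> 'a set set \<Rightarrow> 'b set \<Rightarrow> ('a \<Rightarrow> 'a \<Rightarrow> 'b set) \<Rightarrow> bool" where
  "set_valued_metric V E Om d \<longleftrightarrow>
     (\<forall>x\<in>V. \<forall>y\<in>V. d x y \<subseteq> Om) \<and>
     (\<forall>x\<in>V. \<forall>y\<in>V. d x y = d y x) \<and>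
     (\<forall>x\<in>V. \<forall>y\<in>V. {x, y} \<in> E \<longrightarrow> card (d x y) = 1) \<and>
     (\<forall>x\<in>V. \<forall>y\<in>V. \<forall>z\<in>V. d x z = (d x y - d y z) \<union> (d y z - d x y))"

definition equivariant_involution ::
  "'a set \<Rightarrow> 'b set \<Rightarrow> ('a \<Rightarrow> 'a \<Rightarrow> 'b set) \<Rightarrow> ('a \<Rightarrow> 'a) \<Rightarrow> bool" where
  "equivariant_involution V Om d neg \<longleftrightarrow>
     (\<forall>x\<in>V. neg x \<in> V \<and> neg (neg x) = x) \<and>
     (\<forall>x\<in>V. \<forall>y\<in>V. d x (neg y) = Om - d x y)"

end

theory Submission
  imports Defs
begin

text \<open>Each edge of a walk changes the set-valued distance to the start by exactly one element,
  so a walk from \<open>x\<close> to \<open>y\<close> has length at least \<open>|\<Omega>(x,y)|\<close>. Equivariance and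
  \<open>\<Omega>(x,x) = \<emptyset>\<close> give \<open>\<Omega>(x,-x) = \<Omega>\<close>, hence \<open>x\<close> and \<open>-x\<close> are at distance at least \<open>|\<Omega>|\<close>.\<close>

lemma set_valued_metric_self:
  assumes "set_valued_metric V E Om d" and "x \<in> V"
  shows "d x x = {}"
  using assms unfolding set_valued_metric_def by blast

lemma set_valued_metric_card_le_walk_length:
  assumes metric: "set_valued_metric V E Om d" and fin: "finite Om"
    and "is_walk V E p"
  shows "card (d (hd p) (last p)) \<le> length p - 1"
  using \<open>is_walk V E p\<close>
proof (induction p)
  case Nil
  then show ?case by (simp add: is_walk_def)
next
  case (Cons a q)
  have aV: "a \<in> V" using Cons.prems by (simp add: is_walk_def)
  show ?case
  proof (cases "q = []")
    case True
    then show ?thesis using set_valued_metric_self[OF metric aV] by simp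
  next
    case False
    let ?b = "hd q" and ?z = "last q"
    have walk_q: "is_walk V E q"
      using Cons.prems False unfolding is_walk_def by (auto simp: nth_Cons_Suc)
    have edge: "{a, ?b} \<in> E"
      using Cons.prems False unfolding is_walk_def by (force simp: hd_conv_nth)
    have bV: "?b \<in> V" and zV: "?z \<in> V" using walk_q False unfolding is_walk_def by auto
    have card_edge: "card (d a ?b) = 1"
      using metric aV bV edge unfolding set_valued_metric_def by blast
    have triangle: "d a ?z \<subseteq> d a ?b \<union> d ?b ?z"
      using metric aV bV zV unfolding set_valued_metric_def by blast
    have "finite (d a ?b \<union> d ?b ?z)"
      using metric aV bV zV fin unfolding set_valued_metric_def by (meson finite_Un finite_subset)
    then have "card (d a ?z) \<le> card (d a ?b \<union> d ?b ?z)"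
      using triangle by (rule card_mono)
    also have "\<dots> \<le> card (d a ?b) + card (d ?b ?z)" by (rule card_Un_le)
    also have "\<dots> \<le> 1 + (length q - 1)" using card_edge Cons.IH[OF walk_q] by simp
    finally show ?thesis using False by simp
  qed
qed

lemma equivariant_involution_antipode:
  assumes "set_valued_metric V E Om d" and "equivariant_involution V Om d neg" and "x \<in> V"
  shows "d x (neg x) = Om"
  using assms set_valued_metric_self unfolding equivariant_involution_def by fastforce

lemma graph_dist_geI:
  assumes "\<And>p. is_walk V E p \<Longrightarrow> hd p = x \<Longrightarrow> last p = y \<Longrightarrow> n \<le> length p - 1"
  shows "enat n \<le> graph_dist V E x y"
  unfolding graph_dist_def using assms by (auto intro!: INF_greatest)

lemma graph_dist_le_diameter:
  assumes "x \<in> V" and "y \<in> V"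
  shows "graph_dist V E x y \<le> diameter V E"
  unfolding diameter_def by (meson SUP_upper2 assms order_refl)

theorem proposition3p8:
  fixes V :: "'a set" and E :: "'a set set" and Om :: "'b set"
    and d :: "'a \<Rightarrow> 'a \<Rightarrow> 'b set" and neg :: "'a \<Rightarrow> 'a"
  assumes "simple_graph V E"
    and "connected_graph V E"
    and "finite Om"
    and "set_valued_metric V E Om d"
    and "equivariant_involution V Om d neg"
  shows "enat (card Om) \<le> diameter V E"
proof -
  obtain x where xV: "x \<in> V" using assms(2) unfolding connected_graph_def by auto
  have negV: "neg x \<in> V" using assms(5) xV unfolding equivariant_involution_def by blast
  have "enat (card Om) \<le> graph_dist V E x (neg x)"
  proof (rule graph_dist_geI)
    fix p assume "is_walk V E p" "hd p = x" "last p = neg x"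
    then show "card Om \<le> length p - 1"
      using set_valued_metric_card_le_walk_length[OF assms(4,3)]
        equivariant_involution_antipode[OF assms(4,5) xV] by metis
  qed
  also have "\<dots> \<le> diameter V E" using xV negV by (rule graph_dist_le_diameter)
  finally show ?thesis .
qed

end
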